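(* Let $\Psi$ be the set of vectors of $L$ of the form $r_{\lambda,\beta}=\bigl(\lambda;\,1,\ \theta\frac{-3-|\lambda|^2}{6}+\beta\bigr)$ with $\lambda\in\Lambda$ and $\beta\in\frac12\mathbb Z$ satisfying $2\beta+1\equiv|\lambda|^2\pmod 2$ (each such vector lies in $L$ and has norm $-3$). Then the graph of $\Psi$ is connected: any two elements of $\Psi$ are joined by a finite chain of elements of $\Psi$, consecutive elements $a,b$ of which satisfy $|\langle a,b\rangle|=\sqrt3$.
   Context: Let $\omega=e^{2\pi i/3}$, $\mathcal E=\mathbb Z[\omega]$, $\theta=\omega-\bar\omega=\sqrt{-3}$; Hermitian forms are conjugate-linear in the first variable; $|v|^2=\langle v,v\rangle$. Identify $\mathcal E/\theta\mathcal E=\mathbb F_3$. The complex Leech lattice $\Lambda\subset\mathcal E^{12}$ is the set of vectors $(m+\theta c_i+3z_i)_{i=1}^{12}$ with $m\in\{0,1,-1\}$, $c=(c_i)\in\{0,\pm1\}^{12}$ reducing mod $\theta$ to a codeword of the ternary Golay code $\mathcal C_{12}$, $z_i\in\mathcal E$, $\sum_i z_i\equiv m\pmod\theta$; $\mathcal C_{12}\subset\mathbb F_3^{12}$ has generator matrix $[I_6\mid A]$ with rows of $A$: $(0,1,1,1,1,1)$, $(-1,0,1,-1,-1,1)$, $(-1,1,0,1,-1,-1)$, $(-1,-1,1,0,1,-1)$, $(-1,-1,-1,1,0,1)$, $(-1,1,-1,-1,1,0)$. The form on $\Lambda$ is $\langle u,v\rangle=-\frac13\sum\bar u_iv_i$.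 $H=\mathcal E^2$ with form $u^*\begin{pmatrix}0&\bar\theta\\ \theta&0\end{pmatrix}v$, and $L=\Lambda\oplus H$ with elements written $(\lambda;\alpha,\beta)$, $\lambda\in\Lambda$, $(\alpha,\beta)\in H$. *)

theory Defs
  imports Complex_Main
begin

(* omega = e^{2 pi i/3}, theta = omega - conj omega = sqrt(-3) *)
definition omega :: complex where
  "omega = cis (2 * pi / 3)"

definition theta :: complex where
  "theta = omega - cnj omega"

definition eisenstein :: "complex \<Rightarrow> bool" where
  "eisenstein z \<longleftrightarrow> (\<exists>a b :: int. z = of_int a + of_int b * omega)"

definition golayA :: "nat \<Rightarrow> nat \<Rightarrow> int" where
  "golayA j k = [[0,1,1,1,1,1],
                 [-1,0,1,-1,-1,1],
                 [-1,1,0,1,-1,-1],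
                 [-1,-1,1,0,1,-1],
                 [-1,-1,-1,1,0,1],
                 [-1,1,-1,-1,1,0]] ! j ! k"

definition golayG :: "nat \<Rightarrow> nat \<Rightarrow> int" where
  "golayG j i = (if i < 6 then (if i = j then 1 else 0) else golayA j (i - 6))"

definition golay_codeword :: "(nat \<Rightarrow> int) \<Rightarrow> bool" where
  "golay_codeword c \<longleftrightarrow>
     (\<exists>x :: nat \<Rightarrow> int. \<forall>i<12. c i mod 3 = (\<Sum>j<6. x j * golayG j i) mod 3)"

(* vectors of C^12 are represented as functions nat => complex, coordinates 0..11,
   vanishing at indices >= 12 *)
definition leech :: "(nat \<Rightarrow> complex) set" where
  "leech = {v. (\<forall>i\<ge>12. v i = 0) \<and>
     (\<exists>(m::int) (c::nat \<Rightarrow> int) (z::nat \<Rightarrow> complex).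
        m \<in> {0, 1, -1} \<and>
        (\<forall>i<12. c i \<in> {-1, 0, 1}) \<and> golay_codeword c \<and>
        (\<forall>i<12. eisenstein (z i)) \<and>
        (\<exists>w. eisenstein w \<and> (\<Sum>i<12. z i) - of_int m = theta * w) \<and>
        (\<forall>i<12. v i = of_int m + theta * of_int (c i) + 3 * z i))}"

definition leech_form :: "(nat \<Rightarrow> complex) \<Rightarrow> (nat \<Rightarrow> complex) \<Rightarrow> complex" where
  "leech_form u v = - (1/3) * (\<Sum>i<12. cnj (u i) * v i)"

definition leech_norm :: "(nat \<Rightarrow> complex) \<Rightarrow> real" where
  "leech_norm v = Re (leech_form v v)"

(* L = Lambda (+) H, elements (lambda; alpha, beta) *)
type_synonym Lvec = "(nat \<Rightarrow> complex) \<times> complex \<times> complex"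

definition Lset :: "Lvec set" where
  "Lset = {(l, a, b). l \<in> leech \<and> eisenstein a \<and> eisenstein b}"

definition L_form :: "Lvec \<Rightarrow> Lvec \<Rightarrow> complex" where
  "L_form x y = (case x of (l, a, b) \<Rightarrow> case y of (l', a', b') \<Rightarrow>
      leech_form l l' + cnj a * cnj theta * b' + cnj b * theta * a')"

definition r_vec :: "(nat \<Rightarrow> complex) \<Rightarrow> real \<Rightarrow> Lvec" where
  "r_vec l \<beta> = (l, 1, theta * of_real ((-3 - leech_norm l) / 6) + of_real \<beta>)"

definition Psi :: "Lvec set" where
  "Psi = {r_vec l \<beta> | l \<beta>. l \<in> leech \<and>
            (\<exists>n::int. \<beta> = of_int n / 2) \<and>
            (\<exists>k::int. 2 * \<beta> + 1 - leech_norm l = 2 * of_int k)}"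

definition Psi_adj :: "Lvec \<Rightarrow> Lvec \<Rightarrow> bool" where
  "Psi_adj a b \<longleftrightarrow> a \<in> Psi \<and> b \<in> Psi \<and> cmod (L_form a b) = sqrt 3"

end

theory Submission
  imports Defs "HOL-Library.Function_Algebras" "HOL-Number_Theory.Cong"
begin

text \<open>Passing from the root \<open>r(\<lambda>, \<beta>)\<close> to \<open>r(\<lambda> + s, \<gamma>)\<close> the inner product has real part
  \<open>-3 - |s|\<^sup>2/2\<close> and an imaginary part that \<open>\<gamma>\<close> can shift freely; for \<open>|s|\<^sup>2 = -6\<close> or \<open>-9\<close>
  it can be given absolute value \<open>\<surd>3\<close>, and since \<open>\<langle>\<lambda>, s\<rangle> \<in> \<theta>\<E>\<close> the required \<open>\<gamma>\<close> again
  satisfies the conditions defining \<open>\<Psi>\<close>. So from every root one can move to a root over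
  \<open>\<lambda> \<pm> s\<close> for each lattice vector \<open>s\<close> of norm \<open>-6\<close> or \<open>-9\<close>; going along such an \<open>s\<close> of norm
  \<open>-9\<close> and back changes \<open>\<beta>\<close> by \<open>1\<close>, which connects the roots over a fixed \<open>\<lambda>\<close>. Finally
  \<open>\<Lambda>\<close> is additively generated by vectors of norm \<open>-6\<close> and \<open>-9\<close>: the vector
  \<open>(4, 1, \<dots>, 1)\<close>, the vectors \<open>\<theta> g\<close> for the rows \<open>g\<close> of the Golay generator matrix, and
  the \<open>\<E>\<close>-multiples of \<open>3 (e\<^sub>k - e\<^sub>0)\<close> and \<open>3 \<theta> e\<^sub>0\<close>.\<close>

section \<open>Eisenstein integers\<close>

lemma omega_eq: "omega = Complex (-1/2) (sqrt 3 / 2)"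
  by (simp add: omega_def cis.ctr cos_120 sin_120)

lemma theta_eq: "theta = Complex 0 (sqrt 3)"
  by (simp add: theta_def omega_eq complex_eq_iff)

lemma theta_eq_omega: "theta = 1 + 2 * omega"
  by (simp add: theta_eq omega_eq complex_eq_iff)

lemma omega_squared: "omega * omega = -1 - omega"
  by (simp add: omega_eq complex_eq_iff field_simps)

lemma theta_squared: "theta * theta = -3"
  by (simp add: theta_eq complex_eq_iff)

lemma theta_squared_left: "theta * (theta * x) = -3 * x"
  by (simp add: mult.assoc[symmetric] theta_squared)

lemma cnj_theta: "cnj theta = - theta"
  by (simp add: theta_eq complex_eq_iff)

lemma cnj_omega: "cnj omega = -1 - omega"
  by (simp add: omega_eq complex_eq_iff)

lemma cnj_omega_mult_omega: "cnj omega * omega = 1"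
  by (simp add: omega_eq complex_eq_iff power2_eq_square)

lemma theta_mult_eisenstein_coords:
  "theta * (of_int x + of_int y * omega) = Complex (- 3 * of_int y / 2) (sqrt 3 * (of_int x - of_int y / 2))"
  by (simp add: theta_eq omega_eq complex_eq_iff algebra_simps)

lemma eisenstein_of_int [simp]: "eisenstein (of_int n)"
  unfolding eisenstein_def by (rule exI[of _ n], rule exI[of _ 0]) simp

lemma eisenstein_0 [simp]: "eisenstein 0"
  using eisenstein_of_int[of 0] by simp

lemma eisenstein_1 [simp]: "eisenstein 1"
  using eisenstein_of_int[of 1] by simp

lemma eisenstein_numeral [simp]: "eisenstein (numeral n)"
  using eisenstein_of_int[of "numeral n"] by simp

lemma eisenstein_omega [simp]: "eisenstein omega"
  unfolding eisenstein_def by (rule exI[of _ 0], rule exI[of _ 1]) simp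

lemma eisenstein_add [simp]:
  assumes "eisenstein x" "eisenstein y"
  shows "eisenstein (x + y)"
proof -
  obtain a b c d :: int where "x = a + b * omega" "y = c + d * omega"
    using assms unfolding eisenstein_def by blast
  then have "x + y = of_int (a + c) + of_int (b + d) * omega"
    by (simp add: algebra_simps)
  then show ?thesis
    unfolding eisenstein_def by blast
qed

lemma eisenstein_uminus [simp]:
  assumes "eisenstein x"
  shows "eisenstein (- x)"
proof -
  obtain a b :: int where "x = a + b * omega"
    using assms unfolding eisenstein_def by blast
  then have "- x = of_int (- a) + of_int (- b) * omega"
    by simp
  then show ?thesis
    unfolding eisenstein_def by blast
qed

lemma eisenstein_diff [simp]: "eisenstein x \<Longrightarrow> eisenstein y \<Longrightarrow> eisenstein (x - y)"
  using eisenstein_add[of x "- y"] by simp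

lemma eisenstein_mult [simp]:
  assumes "eisenstein x" "eisenstein y"
  shows "eisenstein (x * y)"
proof -
  obtain a b c d :: int where x: "x = a + b * omega" and y: "y = c + d * omega"
    using assms unfolding eisenstein_def by blast
  have "x * y = a * c + (a * d + b * c) * omega + b * d * (omega * omega)"
    unfolding x y by (simp add: algebra_simps)
  also have "\<dots> = of_int (a * c - b * d) + of_int (a * d + b * c - b * d) * omega"
    unfolding omega_squared by (simp add: algebra_simps)
  finally show ?thesis
    unfolding eisenstein_def by blast
qed

lemma eisenstein_theta [simp]: "eisenstein theta"
  by (simp add: theta_eq_omega)

lemma eisenstein_cnj [simp]:
  assumes "eisenstein x"
  shows "eisenstein (cnj x)"
proof -
  obtain a b :: int where "x = a + b * omega"
    using assms unfolding eisenstein_def by blast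
  then have "cnj x = of_int (a - b) + of_int (- b) * omega"
    by (simp add: cnj_omega algebra_simps)
  then show ?thesis
    unfolding eisenstein_def by blast
qed

lemma eisenstein_sum [simp]: "(\<And>i. i \<in> A \<Longrightarrow> eisenstein (f i)) \<Longrightarrow> eisenstein (sum f A)"
  by (induction A rule: infinite_finite_induct) auto

section \<open>The ternary Golay code\<close>

definition golay_encode :: "(nat \<Rightarrow> int) \<Rightarrow> nat \<Rightarrow> int" where
  "golay_encode x i = (\<Sum>j<6. x j * golayG j i)"

lemma golay_codeword_iff: "golay_codeword c \<longleftrightarrow> (\<exists>x. \<forall>i<12. [c i = golay_encode x i] (mod 3))"
  unfolding golay_codeword_def golay_encode_def cong_def ..

lemma golayG_rows_orthogonal: "j < 6 \<Longrightarrow> k < 6 \<Longrightarrow> (3::int) dvd (\<Sum>i<12. golayG j i * golayG k i)"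
  by (auto simp: golayG_def golayA_def numeral_eq_Suc lessThan_Suc less_Suc_eq)

lemma golayG_row_sum: "j < 6 \<Longrightarrow> (3::int) dvd (\<Sum>i<12. golayG j i)"
  by (auto simp: golayG_def golayA_def numeral_eq_Suc lessThan_Suc less_Suc_eq)

lemma golayG_row_sum_squares: "j < 6 \<Longrightarrow> (\<Sum>i<12. (golayG j i)\<^sup>2) = 6"
  by (auto simp: golayG_def golayA_def numeral_eq_Suc lessThan_Suc less_Suc_eq)

lemma golay_encode_orthogonal: "(3::int) dvd (\<Sum>i<12. golay_encode x i * golay_encode y i)"
proof -
  have "(\<Sum>i<12. golay_encode x i * golay_encode y i)
      = (\<Sum>i<12. \<Sum>j<6. \<Sum>k<6. x j * y k * (golayG j i * golayG k i))"
    unfolding golay_encode_def by (simp add: sum_product algebra_simps)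
  also have "\<dots> = (\<Sum>j<6. \<Sum>k<6. x j * y k * (\<Sum>i<12. golayG j i * golayG k i))"
    by (simp add: sum_distrib_left sum.swap[of _ "{..<12::nat}"])
  finally show ?thesis
    by (simp only:) (intro dvd_sum dvd_mult golayG_rows_orthogonal; simp)
qed

lemma golay_encode_sum: "(3::int) dvd (\<Sum>i<12. golay_encode x i)"
proof -
  have "(\<Sum>i<12. golay_encode x i) = (\<Sum>j<6. x j * (\<Sum>i<12. golayG j i))"
    unfolding golay_encode_def sum_distrib_left by (rule sum.swap)
  then show ?thesis
    by (simp only:) (intro dvd_sum dvd_mult golayG_row_sum; simp)
qed

lemma golay_codeword_orthogonal:
  assumes "golay_codeword c" "golay_codeword c'"
  shows "(3::int) dvd (\<Sum>i<12. c i * c' i)"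
proof -
  obtain x y where x: "\<forall>i<12. [c i = golay_encode x i] (mod 3)"
    and y: "\<forall>i<12. [c' i = golay_encode y i] (mod 3)"
    using assms unfolding golay_codeword_iff by blast
  have "[(\<Sum>i<12. c i * c' i) = (\<Sum>i<12. golay_encode x i * golay_encode y i)] (mod 3)"
    using x y by (intro cong_sum cong_mult) auto
  then show ?thesis
    using golay_encode_orthogonal by (simp add: cong_dvd_iff)
qed

lemma golay_codeword_sum:
  assumes "golay_codeword c"
  shows "(3::int) dvd (\<Sum>i<12. c i)"
proof -
  obtain x where x: "\<forall>i<12. [c i = golay_encode x i] (mod 3)"
    using assms unfolding golay_codeword_iff by blast
  have "[(\<Sum>i<12. c i) = (\<Sum>i<12. golay_encode x i)] (mod 3)"
    using x by (intro cong_sum) auto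
  then show ?thesis
    using golay_encode_sum by (simp add: cong_dvd_iff)
qed

lemma golay_codeword_cong:
  "golay_codeword c \<Longrightarrow> (\<And>i. i < 12 \<Longrightarrow> [c' i = c i] (mod 3)) \<Longrightarrow> golay_codeword c'"
  unfolding golay_codeword_iff by (meson cong_trans)

lemma golay_codeword_zero: "golay_codeword 0"
  unfolding golay_codeword_iff golay_encode_def by (rule exI[of _ 0]) simp

lemma golay_codeword_row: "j < 6 \<Longrightarrow> golay_codeword (golayG j)"
  unfolding golay_codeword_iff golay_encode_def
  by (rule exI[of _ "\<lambda>j'. if j' = j then 1 else 0"])
     (simp add: if_distrib[of "\<lambda>x. x * _"] cong: if_cong)

lemma golay_codeword_add:
  assumes "golay_codeword c" "golay_codeword c'"
  shows "golay_codeword (c + c')"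
proof -
  obtain x y where "\<forall>i<12. [c i = golay_encode x i] (mod 3)" "\<forall>i<12. [c' i = golay_encode y i] (mod 3)"
    using assms unfolding golay_codeword_iff by blast
  then have "\<forall>i<12. [(c + c') i = golay_encode (x + y) i] (mod 3)"
    by (simp add: golay_encode_def sum.distrib distrib_right cong_add)
  then show ?thesis
    unfolding golay_codeword_iff by blast
qed

lemma golay_codeword_uminus:
  assumes "golay_codeword c"
  shows "golay_codeword (- c)"
proof -
  obtain x where "\<forall>i<12. [c i = golay_encode x i] (mod 3)"
    using assms unfolding golay_codeword_iff by blast
  then have "\<forall>i<12. [(- c) i = golay_encode (- x) i] (mod 3)"
    by (simp add: golay_encode_def sum_negf cong_minus_minus_iff)
  then show ?thesis
    unfolding golay_codeword_iff by blast
qed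

section \<open>The complex Leech lattice\<close>

text \<open>The coordinates of the definition of \<open>leech\<close> without the normalisation
  \<open>m, c i \<in> {-1, 0, 1}\<close>, which is not preserved by addition.\<close>

definition leech_coords ::
    "(nat \<Rightarrow> complex) \<Rightarrow> int \<Rightarrow> (nat \<Rightarrow> int) \<Rightarrow> (nat \<Rightarrow> complex) \<Rightarrow> complex \<Rightarrow> bool" where
  "leech_coords l m c z w \<longleftrightarrow> golay_codeword c \<and> (\<forall>i<12. eisenstein (z i)) \<and> eisenstein w \<and>
     (\<Sum>i<12. z i) - of_int m = theta * w \<and>
     (\<forall>i<12. l i = of_int m + theta * of_int (c i) + 3 * z i) \<and> (\<forall>i\<ge>12. l i = 0)"

lemma int_balanced_mod_3:
  fixes n :: int
  shows "n = ((n + 1) mod 3 - 1) + 3 * ((n + 1) div 3)" and "(n + 1) mod 3 - 1 \<in> {-1, 0, 1}"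
  by (presburger, simp, presburger)

lemma leech_iff_coords: "l \<in> leech \<longleftrightarrow> (\<exists>m c z w. leech_coords l m c z w)"
proof
  show "l \<in> leech \<Longrightarrow> \<exists>m c z w. leech_coords l m c z w"
    unfolding leech_def leech_coords_def by blast
next
  assume "\<exists>m c z w. leech_coords l m c z w"
  then obtain m c z w where cw: "golay_codeword c" and z: "\<forall>i<12. eisenstein (z i)"
    and w: "eisenstein w" and sum_z: "(\<Sum>i<12. z i) - of_int m = theta * w"
    and l: "\<forall>i<12. l i = of_int m + theta * of_int (c i) + 3 * z i" and l0: "\<forall>i\<ge>12. l i = 0"
    unfolding leech_coords_def by blast
  define m0 k where "m0 = (m + 1) mod 3 - 1" and "k = (m + 1) div 3"
  define c0 e where "c0 i = (c i + 1) mod 3 - 1" and "e i = (c i + 1) div 3" for i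
  have m: "m = m0 + 3 * k" and m0: "m0 \<in> {-1, 0, 1}"
    unfolding m0_def k_def by (fact int_balanced_mod_3)+
  have c: "c i = c0 i + 3 * e i" and c0: "c0 i \<in> {-1, 0, 1}" for i
    unfolding c0_def e_def by (fact int_balanced_mod_3)+
  define z0 where "z0 i = z i + of_int k + theta * of_int (e i)" for i
  define w0 where "w0 = w + of_int (\<Sum>i<12. e i) - 5 * theta * of_int k"
  have "golay_codeword c0"
    by (rule golay_codeword_cong[OF cw]) (simp add: c cong_def)
  moreover have "(\<Sum>i<12. z0 i) - of_int m0 = theta * w0"
    using sum_z unfolding z0_def w0_def m
    by (simp add: sum.distrib sum_distrib_left algebra_simps theta_squared_left)
  moreover have "\<forall>i<12. l i = of_int m0 + theta * of_int (c0 i) + 3 * z0 i"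
    using l unfolding z0_def m c by (simp add: algebra_simps)
  moreover have "\<forall>i<12. eisenstein (z0 i)" "eisenstein w0"
    using z w by (simp_all add: z0_def w0_def)
  moreover have "m0 \<in> {0, 1, -1}"
    using m0 by auto
  ultimately show "l \<in> leech"
    unfolding leech_def using l0 c0 by blast
qed

lemma zero_in_leech: "0 \<in> leech"
  unfolding leech_iff_coords leech_coords_def
  by (intro exI[of _ 0]) (simp add: golay_codeword_zero)

lemma leech_add:
  assumes "l \<in> leech" "l' \<in> leech"
  shows "l + l' \<in> leech"
proof -
  obtain m c z w m' c' z' w' where "leech_coords l m c z w" "leech_coords l' m' c' z' w'"
    using assms unfolding leech_iff_coords by blast
  then have "leech_coords (l + l') (m + m') (c + c') (z + z') (w + w')"
    unfolding leech_coords_def by (simp add: golay_codeword_add sum.distrib algebra_simps)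
  then show ?thesis
    unfolding leech_iff_coords by blast
qed

lemma leech_uminus:
  assumes "l \<in> leech"
  shows "- l \<in> leech"
proof -
  obtain m c z w where "leech_coords l m c z w"
    using assms unfolding leech_iff_coords by blast
  then have "leech_coords (- l) (- m) (- c) (- z) (- w)"
    unfolding leech_coords_def by (simp add: golay_codeword_uminus sum_negf algebra_simps)
  then show ?thesis
    unfolding leech_iff_coords by blast
qed

lemma leech_form_add_left: "leech_form (l + l') l'' = leech_form l l'' + leech_form l' l''"
  unfolding leech_form_def by (simp add: sum.distrib algebra_simps)

lemma leech_form_add_right: "leech_form l (l' + l'') = leech_form l l' + leech_form l l''"
  unfolding leech_form_def by (simp add: sum.distrib algebra_simps)

lemma leech_form_uminus_left: "leech_form (- l) l' = - leech_form l l'"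
  unfolding leech_form_def by (simp add: sum_negf)

lemma leech_form_uminus_right: "leech_form l (- l') = - leech_form l l'"
  unfolding leech_form_def by (simp add: sum_negf)

lemma leech_form_swap: "leech_form l' l = cnj (leech_form l l')"
  unfolding leech_form_def by (simp add: mult.commute)

lemma leech_form_self: "leech_form l l = of_real (leech_norm l)"
proof -
  have "Im (leech_form l l) = 0"
    unfolding leech_form_def by (simp add: Im_sum)
  then show ?thesis
    unfolding leech_norm_def by (simp add: complex_eq_iff)
qed

lemma leech_norm_add: "leech_norm (l + l') = leech_norm l + leech_norm l' + 2 * Re (leech_form l l')"
  unfolding leech_norm_def leech_form_add_left leech_form_add_right
  by (simp add: leech_form_swap[of l' l])

lemma leech_norm_uminus: "leech_norm (- l) = leech_norm l"
  unfolding leech_norm_def by (simp add: leech_form_uminus_left leech_form_uminus_right)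

lemma leech_norm_omega_mult: "leech_norm (\<lambda>i. omega * l i) = leech_norm l"
proof -
  have "cnj (omega * l i) * (omega * l i) = cnj (l i) * l i" for i
    using cnj_omega_mult_omega by (simp add: algebra_simps)
  then show ?thesis
    unfolding leech_norm_def leech_form_def by (simp only:)
qed

lemma cnj_mult_leech_coords:
  "cnj (of_int m + theta * of_int c + 3 * z) * (of_int m' + theta * of_int c' + 3 * z')
    = of_int (m * m') + theta * of_int (m * c' - m' * c) + 3 * of_int (c * c')
      + 3 * of_int m * z' + 3 * of_int m' * cnj z
      + 3 * theta * (cnj z * of_int c' - of_int c * z' - theta * cnj z * z')"
proof -
  have cnj_eq: "cnj (of_int m + theta * of_int c + 3 * z) = of_int m - theta * of_int c + 3 * cnj z"
    by (simp add: cnj_theta)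
  show ?thesis
    unfolding cnj_eq by (simp add: algebra_simps theta_squared theta_squared_left)
qed

text \<open>The inner products of \<open>\<Lambda>\<close> lie in \<open>3\<theta>\<E>\<close>: after expanding, the terms not visibly divisible
  by \<open>3\<theta>\<close> are controlled by the self-orthogonality of the Golay code and by
  \<open>\<Sum> z\<^sub>i \<equiv> m (mod \<theta>)\<close>.\<close>

lemma leech_coords_inner_product:
  assumes "leech_coords l m c z w" "leech_coords l' m' c' z' w'"
  shows "\<exists>e. eisenstein e \<and> (\<Sum>i<12. cnj (l i) * l' i) = 3 * theta * e"
proof -
  from assms(1) have cw: "golay_codeword c" and z: "\<forall>i<12. eisenstein (z i)" and w: "eisenstein w"
    and sum_z: "(\<Sum>i<12. z i) - of_int m = theta * w"
    and l: "\<forall>i<12. l i = of_int m + theta * of_int (c i) + 3 * z i"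
    unfolding leech_coords_def by blast+
  from assms(2) have cw': "golay_codeword c'" and z': "\<forall>i<12. eisenstein (z' i)" and w': "eisenstein w'"
    and sum_z': "(\<Sum>i<12. z' i) - of_int m' = theta * w'"
    and l': "\<forall>i<12. l' i = of_int m' + theta * of_int (c' i) + 3 * z' i"
    unfolding leech_coords_def by blast+
  obtain p where p: "(\<Sum>i<12. c i) = 3 * p"
    using golay_codeword_sum[OF cw] by blast
  obtain p' where p': "(\<Sum>i<12. c' i) = 3 * p'"
    using golay_codeword_sum[OF cw'] by blast
  obtain q where q: "(\<Sum>i<12. c i * c' i) = 3 * q"
    using golay_codeword_orthogonal[OF cw cw'] by blast
  define g where "g i = cnj (z i) * of_int (c' i) - of_int (c i) * z' i - theta * cnj (z i) * z' i" for i
  define e where "e = - 2 * theta * of_int (m * m') + of_int (m * p' - m' * p)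
      - theta * of_int q + of_int m * w' - of_int m' * cnj w + (\<Sum>i<12. g i)"
  have sum_z'_eq: "(\<Sum>i<12. z' i) = of_int m' + theta * w'"
    using sum_z' by (simp add: algebra_simps)
  have sum_cnj_z: "(\<Sum>i<12. cnj (z i)) = of_int m - theta * cnj w"
    using arg_cong[OF sum_z, of cnj] by (simp add: cnj_theta algebra_simps)
  have "(\<Sum>i<12. cnj (l i) * l' i) = (\<Sum>i<12. of_int (m * m') + theta * of_int (m * c' i - m' * c i)
      + 3 * of_int (c i * c' i) + 3 * of_int m * z' i + 3 * of_int m' * cnj (z i) + 3 * theta * g i)"
    using l l' by (intro sum.cong) (simp_all add: cnj_mult_leech_coords g_def del: complex_cnj_add complex_cnj_mult)
  also have "\<dots> = 12 * of_int (m * m')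
      + theta * (of_int m * of_int (\<Sum>i<12. c' i) - of_int m' * of_int (\<Sum>i<12. c i))
      + 3 * of_int (\<Sum>i<12. c i * c' i) + 3 * of_int m * (\<Sum>i<12. z' i)
      + 3 * of_int m' * (\<Sum>i<12. cnj (z i)) + 3 * theta * (\<Sum>i<12. g i)"
    by (simp add: sum.distrib sum_distrib_left sum_subtractf algebra_simps)
  also have "\<dots> = 3 * theta * e"
    unfolding sum_z'_eq sum_cnj_z p p' q e_def by (simp add: algebra_simps theta_squared theta_squared_left)
  finally have "(\<Sum>i<12. cnj (l i) * l' i) = 3 * theta * e" .
  moreover have "eisenstein e"
  proof -
    have "eisenstein (\<Sum>i<12. g i)"
      using z z' by (intro eisenstein_sum) (simp add: g_def)
    then show ?thesis
      unfolding e_def using w w' by simp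
  qed
  ultimately show ?thesis
    by blast
qed

lemma leech_form_theta_multiple:
  assumes "l \<in> leech" "l' \<in> leech"
  shows "\<exists>e. eisenstein e \<and> leech_form l l' = theta * e"
proof -
  obtain e where "eisenstein e" "(\<Sum>i<12. cnj (l i) * l' i) = 3 * theta * e"
    using assms leech_coords_inner_product unfolding leech_iff_coords by metis
  then show ?thesis
    unfolding leech_form_def by (intro exI[of _ "- e"]) simp
qed

lemma leech_form_Re_Im:
  assumes "l \<in> leech" "l' \<in> leech"
  obtains a b :: int where "Re (leech_form l l') = - 3 * of_int b / 2"
    and "Im (leech_form l l') = sqrt 3 * (of_int a - of_int b / 2)"
proof -
  obtain a b :: int where "leech_form l l' = theta * (of_int a + of_int b * omega)"
    using leech_form_theta_multiple[OF assms] unfolding eisenstein_def by blast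
  then show ?thesis
    using that by (simp add: theta_mult_eisenstein_coords)
qed

lemma leech_norm_multiple_3:
  assumes "l \<in> leech"
  obtains a :: int where "leech_norm l = 3 * of_int a"
proof -
  obtain a b :: int where Re: "Re (leech_form l l) = - 3 * of_int b / 2"
    and Im: "Im (leech_form l l) = sqrt 3 * (of_int a - of_int b / 2)"
    using leech_form_Re_Im[OF assms assms] .
  have "b = 2 * a"
    using Im by (simp add: leech_form_self)
  then show ?thesis
    using Re that[of "- a"] unfolding leech_norm_def by simp
qed

section \<open>Generation by short vectors\<close>

inductive_set sum_closure :: "'a::monoid_add set \<Rightarrow> 'a set" for G where
  sum_closure_zero: "0 \<in> sum_closure G"
| sum_closure_add_gen: "x \<in> sum_closure G \<Longrightarrow> g \<in> G \<Longrightarrow> x + g \<in> sum_closure G"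

lemma sum_closure_add:
  assumes "x \<in> sum_closure G" "y \<in> sum_closure G"
  shows "x + y \<in> sum_closure G"
  using assms(2)
proof induction
  case sum_closure_zero
  then show ?case using assms(1) by simp
next
  case (sum_closure_add_gen y g)
  then show ?case
    by (metis add.assoc sum_closure.sum_closure_add_gen)
qed

lemma sum_closure_sum:
  fixes f :: "'b \<Rightarrow> 'a::comm_monoid_add"
  shows "(\<And>k. k \<in> K \<Longrightarrow> f k \<in> sum_closure G) \<Longrightarrow> sum f K \<in> sum_closure G"
  by (induction K rule: infinite_finite_induct) (auto intro: sum_closure_add sum_closure_zero)

lemma sum_apply: "(\<Sum>k\<in>K. f k) i = (\<Sum>k\<in>K. f k i)"
  by (induction K rule: infinite_finite_induct) auto

definition short_vector :: "(nat \<Rightarrow> complex) \<Rightarrow> bool" where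
  "short_vector s \<longleftrightarrow> s \<in> leech \<and> (leech_norm s = -6 \<or> leech_norm s = -9)"

lemma short_vector_uminus: "short_vector s \<Longrightarrow> short_vector (- s)"
  unfolding short_vector_def by (simp add: leech_uminus leech_norm_uminus)

abbreviation short_closure :: "(nat \<Rightarrow> complex) set" where
  "short_closure \<equiv> sum_closure (Collect short_vector)"

lemma short_closure_int_mult:
  assumes "short_vector s"
  shows "(\<lambda>i. of_int n * s i) \<in> short_closure"
proof (induction n rule: int_induct[where k = 0])
  case base
  have "(\<lambda>i. of_int 0 * s i) = 0"
    by auto
  then show ?case
    using sum_closure_zero by metis
next
  case (step1 n)
  have "(\<lambda>i. of_int (n + 1) * s i) = (\<lambda>i. of_int n * s i) + s"
    by (auto simp: algebra_simps)
  then show ?case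
    using step1.IH assms by (metis mem_Collect_eq sum_closure_add_gen)
next
  case (step2 n)
  have "(\<lambda>i. of_int (n - 1) * s i) = (\<lambda>i. of_int n * s i) + - s"
    by (auto simp: algebra_simps)
  then show ?case
    using step2.IH short_vector_uminus[OF assms] by (metis mem_Collect_eq sum_closure_add_gen)
qed

lemma short_closure_eisenstein_mult:
  assumes "short_vector s" "short_vector (\<lambda>i. omega * s i)" "eisenstein e"
  shows "(\<lambda>i. e * s i) \<in> short_closure"
proof -
  obtain a b :: int where "e = of_int a + of_int b * omega"
    using assms(3) unfolding eisenstein_def by blast
  then have "(\<lambda>i. e * s i) = (\<lambda>i. of_int a * s i) + (\<lambda>i. of_int b * (omega * s i))"
    by (auto simp: algebra_simps)
  then show ?thesis
    using short_closure_int_mult[OF assms(1)] short_closure_int_mult[OF assms(2)]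
    by (metis sum_closure_add)
qed

definition leech_gen_one :: "nat \<Rightarrow> complex" where
  "leech_gen_one i = (if i = 0 then 4 else if i < 12 then 1 else 0)"

definition leech_gen_row :: "nat \<Rightarrow> nat \<Rightarrow> complex" where
  "leech_gen_row j i = (if i < 12 then theta * of_int (golayG j i) else 0)"

definition leech_gen_diff :: "nat \<Rightarrow> nat \<Rightarrow> complex" where
  "leech_gen_diff k i = (if i = k then 3 else if i = 0 then -3 else 0)"

definition leech_gen_theta :: "nat \<Rightarrow> complex" where
  "leech_gen_theta i = (if i = 0 then 3 * theta else 0)"

lemma leech_gen_one_in_leech: "leech_gen_one \<in> leech"
  unfolding leech_iff_coords leech_coords_def
  by (intro exI[of _ 1] exI[of _ 0] exI[of _ "\<lambda>i. if i = 0 then 1 else 0"])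
     (auto simp: golay_codeword_zero leech_gen_one_def)

lemma leech_gen_row_in_leech: "j < 6 \<Longrightarrow> leech_gen_row j \<in> leech"
  unfolding leech_iff_coords leech_coords_def
  by (intro exI[of _ 0] exI[of _ "golayG j"] exI[of _ 0])
     (auto simp: golay_codeword_row leech_gen_row_def)

lemma leech_gen_diff_in_leech:
  assumes "eisenstein e" "0 < k" "k < 12"
  shows "(\<lambda>i. e * leech_gen_diff k i) \<in> leech"
  using assms unfolding leech_iff_coords leech_coords_def
  by (intro exI[of _ 0] exI[of _ 0] exI[of _ "\<lambda>i. e * (if i = k then 1 else if i = 0 then -1 else 0)"])
     (auto simp: golay_codeword_zero leech_gen_diff_def sum.If_cases sum_distrib_left[symmetric])

lemma leech_gen_theta_in_leech:
  assumes "eisenstein e"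
  shows "(\<lambda>i. e * leech_gen_theta i) \<in> leech"
  using assms unfolding leech_iff_coords leech_coords_def
  by (intro exI[of _ 0] exI[of _ 0] exI[of _ "\<lambda>i. if i = 0 then e * theta else 0"] exI[of _ e])
     (auto simp: golay_codeword_zero leech_gen_theta_def)

lemma sum_lessThan_12_split:
  fixes f :: "nat \<Rightarrow> 'a::comm_monoid_add"
  shows "(\<Sum>i<12. f i) = f 0 + (\<Sum>i\<in>{1..<12}. f i)"
proof -
  have "{..<12::nat} = insert 0 {1..<12}" by auto
  then show ?thesis by simp
qed

lemma leech_norm_leech_gen_one: "leech_norm leech_gen_one = -9"
proof -
  have "(\<Sum>i<12. cnj (leech_gen_one i) * leech_gen_one i) = 27"
    by (simp add: sum_lessThan_12_split leech_gen_one_def)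
  then show ?thesis
    unfolding leech_norm_def leech_form_def by simp
qed

lemma leech_norm_leech_gen_row: "j < 6 \<Longrightarrow> leech_norm (leech_gen_row j) = -6"
proof -
  have "cnj (leech_gen_row j i) * leech_gen_row j i = 3 * of_int ((golayG j i)\<^sup>2)" if "i < 12" for i
    using that by (simp add: leech_gen_row_def cnj_theta theta_squared_left power2_eq_square algebra_simps)
  then have "(\<Sum>i<12. cnj (leech_gen_row j i) * leech_gen_row j i) = 3 * of_int (\<Sum>i<12. (golayG j i)\<^sup>2)"
    by (simp add: sum_distrib_left)
  moreover assume "j < 6"
  ultimately show ?thesis
    unfolding leech_norm_def leech_form_def by (simp add: golayG_row_sum_squares)
qed

lemma leech_norm_leech_gen_diff:
  assumes "0 < k" "k < 12"
  shows "leech_norm (leech_gen_diff k) = -6"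
proof -
  have "cnj (leech_gen_diff k i) * leech_gen_diff k i = (if i = k then 9 else 0) + (if i = 0 then 9 else 0)" for i
    using assms by (simp add: leech_gen_diff_def)
  then have "(\<Sum>i<12. cnj (leech_gen_diff k i) * leech_gen_diff k i) = 18"
    using assms by (simp add: sum.distrib)
  then show ?thesis
    unfolding leech_norm_def leech_form_def by simp
qed

lemma leech_norm_leech_gen_theta: "leech_norm leech_gen_theta = -9"
proof -
  have "cnj (leech_gen_theta i) * leech_gen_theta i = (if i = 0 then 27 else 0)" for i
    by (simp add: leech_gen_theta_def cnj_theta theta_squared)
  then have "(\<Sum>i<12. cnj (leech_gen_theta i) * leech_gen_theta i) = 27"
    by simp
  then show ?thesis
    unfolding leech_norm_def leech_form_def by simp
qed

lemma short_vector_leech_gens: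
  shows "short_vector leech_gen_one"
    and "j < 6 \<Longrightarrow> short_vector (leech_gen_row j)"
    and "0 < k \<Longrightarrow> k < 12 \<Longrightarrow> short_vector (leech_gen_diff k)"
    and "0 < k \<Longrightarrow> k < 12 \<Longrightarrow> short_vector (\<lambda>i. omega * leech_gen_diff k i)"
    and "short_vector leech_gen_theta"
    and "short_vector (\<lambda>i. omega * leech_gen_theta i)"
  using leech_gen_diff_in_leech[of 1 k] leech_gen_diff_in_leech[of omega k]
    leech_gen_theta_in_leech[of 1] leech_gen_theta_in_leech[of omega]
  by (simp_all add: short_vector_def leech_gen_one_in_leech leech_gen_row_in_leech
      leech_norm_omega_mult leech_norm_leech_gen_one leech_norm_leech_gen_row
      leech_norm_leech_gen_diff leech_norm_leech_gen_theta)

lemma three_mult_in_short_closure: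
  assumes y: "\<forall>i<12. eisenstein (y i)" "\<forall>i\<ge>12. y i = 0"
    and w: "(\<Sum>i<12. y i) = theta * w" "eisenstein w"
  shows "(\<lambda>i. 3 * y i) \<in> short_closure"
proof -
  have "(\<lambda>i. 3 * y i) = (\<Sum>k\<in>{1..<12}. (\<lambda>i. y k * leech_gen_diff k i)) + (\<lambda>i. w * leech_gen_theta i)"
  proof
    fix i :: nat
    consider "i = 0" | "0 < i" "i < 12" | "12 \<le> i"
      by linarith
    then show "3 * y i = ((\<Sum>k\<in>{1..<12}. (\<lambda>i. y k * leech_gen_diff k i)) + (\<lambda>i. w * leech_gen_theta i)) i"
    proof cases
      case 1
      have "(\<Sum>k\<in>{1..<12}. y k) = theta * w - y 0"
        using w(1) unfolding sum_lessThan_12_split by (metis add_diff_cancel_left')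
      moreover have "(\<Sum>k\<in>{1..<12}. y k * leech_gen_diff k 0) = - 3 * (\<Sum>k\<in>{1..<12}. y k)"
        unfolding sum_distrib_left by (rule sum.cong) (auto simp: leech_gen_diff_def)
      ultimately have "(\<Sum>k\<in>{1..<12}. y k * leech_gen_diff k 0) = - 3 * (theta * w - y 0)"
        by simp
      then show ?thesis
        unfolding 1 by (simp add: sum_apply leech_gen_theta_def algebra_simps)
    next
      case 2
      then show ?thesis
        by (simp add: sum_apply leech_gen_diff_def leech_gen_theta_def if_distrib[of "\<lambda>x. _ * x"] cong: if_cong)
    next
      case 3
      then show ?thesis
        using y(2) by (simp add: sum_apply leech_gen_diff_def leech_gen_theta_def)
    qed
  qed
  also have "\<dots> \<in> short_closure"
    using y w short_vector_leech_gens
    by (intro sum_closure_add sum_closure_sum short_closure_eisenstein_mult) auto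
  finally show ?thesis .
qed

lemma leech_subset_short_closure:
  assumes "l \<in> leech"
  shows "l \<in> short_closure"
proof -
  obtain m c z w where "leech_coords l m c z w"
    using assms unfolding leech_iff_coords by blast
  then have cw: "golay_codeword c" and z: "\<forall>i<12. eisenstein (z i)" and w: "eisenstein w"
    and sum_z: "(\<Sum>i<12. z i) - of_int m = theta * w"
    and l: "\<forall>i<12. l i = of_int m + theta * of_int (c i) + 3 * z i" and l0: "\<forall>i\<ge>12. l i = 0"
    unfolding leech_coords_def by blast+
  obtain x where x: "\<forall>i<12. [c i = golay_encode x i] (mod 3)"
    using cw unfolding golay_codeword_iff by blast
  define d where "d i = (c i - golay_encode x i) div 3" for i
  have c: "c i = golay_encode x i + 3 * d i" if "i < 12" for i
  proof -
    have "3 * d i = c i - golay_encode x i"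
      using x that unfolding d_def cong_iff_dvd_diff by (simp add: dvd_mult_div_cancel)
    then show ?thesis
      by simp
  qed
  define y where "y i = (if i < 12 then z i + theta * of_int (d i) - (if i = 0 then of_int m else 0) else 0)" for i
  have "l = (\<lambda>i. of_int m * leech_gen_one i) + (\<Sum>j<6. (\<lambda>i. of_int (x j) * leech_gen_row j i)) + (\<lambda>i. 3 * y i)"
  proof
    fix i :: nat
    show "l i = ((\<lambda>i. of_int m * leech_gen_one i) + (\<Sum>j<6. (\<lambda>i. of_int (x j) * leech_gen_row j i)) + (\<lambda>i. 3 * y i)) i"
    proof (cases "i < 12")
      case True
      have "(\<Sum>j<6. of_int (x j) * leech_gen_row j i) = theta * of_int (golay_encode x i)"
        using True by (simp add: leech_gen_row_def golay_encode_def sum_distrib_left algebra_simps)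
      then show ?thesis
        using l True c[OF True] by (simp add: sum_apply leech_gen_one_def y_def algebra_simps)
    next
      case False
      then show ?thesis
        using l0 by (simp add: sum_apply leech_gen_one_def leech_gen_row_def y_def)
    qed
  qed
  also have "\<dots> \<in> short_closure"
  proof (intro sum_closure_add sum_closure_sum)
    show "(\<lambda>i. of_int m * leech_gen_one i) \<in> short_closure"
      by (intro short_closure_int_mult short_vector_leech_gens)
    show "(\<lambda>i. of_int (x j) * leech_gen_row j i) \<in> short_closure" if "j \<in> {..<6}" for j
      using that by (intro short_closure_int_mult short_vector_leech_gens) simp
    have "(\<Sum>i<12. y i) = (\<Sum>i<12. z i) + theta * of_int (\<Sum>i<12. d i) - of_int m"
      by (simp add: y_def sum.distrib sum_subtractf sum_distrib_left)
    also have "\<dots> = theta * (w + of_int (\<Sum>i<12. d i))"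
      using sum_z by (simp add: algebra_simps)
    finally have sum_y: "(\<Sum>i<12. y i) = theta * (w + of_int (\<Sum>i<12. d i))" .
    show "(\<lambda>i. 3 * y i) \<in> short_closure"
      using z w by (intro three_mult_in_short_closure[OF _ _ sum_y]) (simp_all add: y_def)
  qed
  finally show ?thesis .
qed

section \<open>The graph of roots\<close>

definition admissible :: "(nat \<Rightarrow> complex) \<Rightarrow> real \<Rightarrow> bool" where
  "admissible l \<beta> \<longleftrightarrow> l \<in> leech \<and> (\<exists>n::int. \<beta> = of_int n / 2) \<and>
     (\<exists>k::int. 2 * \<beta> + 1 - leech_norm l = 2 * of_int k)"

lemma Psi_iff: "x \<in> Psi \<longleftrightarrow> (\<exists>l \<beta>. x = r_vec l \<beta> \<and> admissible l \<beta>)"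
  unfolding Psi_def admissible_def by blast

lemma admissible_shift:
  assumes "admissible l \<beta>"
  shows "admissible l (\<beta> + of_int j)"
proof -
  obtain n k :: int where "\<beta> = of_int n / 2" "2 * \<beta> + 1 - leech_norm l = 2 * of_int k"
    using assms unfolding admissible_def by blast
  then have "\<beta> + of_int j = of_int (n + 2 * j) / 2"
    and "2 * (\<beta> + of_int j) + 1 - leech_norm l = 2 * of_int (k + j)"
    by simp_all
  then show ?thesis
    using assms unfolding admissible_def by blast
qed

lemma admissible_zero: "admissible 0 (1/2)"
proof -
  have "leech_norm 0 = 0"
    unfolding leech_norm_def leech_form_def by simp
  then show ?thesis
    unfolding admissible_def using zero_in_leech
    by (intro conjI exI[of _ 1]) simp_all
qed

lemma L_form_r_vec:
  "L_form (r_vec l \<beta>) (r_vec l' \<gamma>)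
    = leech_form l l' - of_real (3 + (leech_norm l + leech_norm l') / 2) + theta * of_real (\<beta> - \<gamma>)"
proof -
  have "L_form (r_vec l \<beta>) (r_vec l' \<gamma>) = leech_form l l'
      - theta * (theta * of_real ((-3 - leech_norm l') / 6) + of_real \<gamma>)
      + (- theta * of_real ((-3 - leech_norm l) / 6) + of_real \<beta>) * theta"
    unfolding L_form_def r_vec_def by (simp add: cnj_theta)
  also have "\<dots> = leech_form l l' - of_real (3 + (leech_norm l + leech_norm l') / 2)
      + theta * of_real (\<beta> - \<gamma>)"
    by (simp add: algebra_simps theta_squared theta_squared_left field_simps)
  finally show ?thesis .
qed

lemma L_form_r_vec_self: "L_form (r_vec l \<beta>) (r_vec l \<beta>) = -3"
  unfolding L_form_r_vec leech_form_self by (simp add: complex_eq_iff)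

lemma L_form_r_vec_add:
  "L_form (r_vec l \<beta>) (r_vec (l + s) \<gamma>)
    = Complex (- 3 - leech_norm s / 2) (Im (leech_form l s) + sqrt 3 * (\<beta> - \<gamma>))"
  unfolding L_form_r_vec leech_norm_add leech_form_add_right leech_form_self
  by (simp add: complex_eq_iff theta_eq field_simps)

lemma r_vec_in_Lset:
  assumes "admissible l \<beta>"
  shows "r_vec l \<beta> \<in> Lset"
proof -
  obtain k :: int where l: "l \<in> leech" and k: "2 * \<beta> + 1 - leech_norm l = 2 * of_int k"
    using assms unfolding admissible_def by blast
  obtain a :: int where a: "leech_norm l = 3 * of_int a"
    using leech_norm_multiple_3[OF l] .
  have "\<beta> = k - 1/2 + 3 * a / 2"
    using k a by simp
  then have "theta * of_real ((-3 - leech_norm l) / 6) + of_real \<beta>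
      = of_int (k - 1 + a) + of_int (- 1 - a) * omega"
    unfolding a by (simp add: theta_eq omega_eq complex_eq_iff field_simps)
  moreover have "eisenstein (of_int (k - 1 + a) + of_int (- 1 - a) * omega)"
    unfolding eisenstein_def by blast
  ultimately show ?thesis
    unfolding Lset_def r_vec_def using l by simp
qed

lemma Psi_adj_sym: "Psi_adj x y \<Longrightarrow> Psi_adj y x"
proof -
  have "L_form y x = cnj (L_form x y)"
    unfolding L_form_def by (cases x, cases y) (auto intro: leech_form_swap)
  then show "Psi_adj x y \<Longrightarrow> Psi_adj y x"
    unfolding Psi_adj_def by simp
qed

lemma Psi_path_sym: "Psi_adj\<^sup>*\<^sup>* x y \<Longrightarrow> Psi_adj\<^sup>*\<^sup>* y x"
  using symp_rtranclp[OF sympI[of Psi_adj, OF Psi_adj_sym]] by (rule sympD)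

lemma admissible_add:
  assumes adm: "admissible l \<beta>" and s: "s \<in> leech"
    and d: "2 * \<delta> = of_int d" and j: "of_int d + leech_norm s = 2 * of_int j"
  shows "admissible (l + s) (\<beta> + Im (leech_form l s) / sqrt 3 - \<delta>)"
proof -
  obtain n k :: int where l: "l \<in> leech" and n: "\<beta> = of_int n / 2"
    and k: "2 * \<beta> + 1 - leech_norm l = 2 * of_int k"
    using adm unfolding admissible_def by blast
  obtain a b :: int where Re: "Re (leech_form l s) = - 3 * of_int b / 2"
    and Im: "Im (leech_form l s) = sqrt 3 * (of_int a - of_int b / 2)"
    using leech_form_Re_Im[OF l s] .
  define \<gamma> where "\<gamma> = \<beta> + Im (leech_form l s) / sqrt 3 - \<delta>"
  have \<gamma>: "\<gamma> = \<beta> + of_int a - of_int b / 2 - \<delta>"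
    unfolding \<gamma>_def Im by simp
  have "\<gamma> = of_int (n + 2 * a - b - d) / 2"
    using \<gamma> n d by simp
  moreover have "2 * \<gamma> + 1 - leech_norm (l + s) = 2 * of_int (k + a + b - j)"
    using \<gamma> k d j unfolding leech_norm_add Re by simp
  ultimately show ?thesis
    unfolding admissible_def \<gamma>_def[symmetric] using leech_add[OF l s] by blast
qed

lemma cmod_L_form_r_vec_add:
  assumes "leech_norm s = -6 \<and> \<delta> = 1 \<or> leech_norm s = -9 \<and> \<delta> = 1/2"
  shows "cmod (L_form (r_vec l \<beta>) (r_vec (l + s) (\<beta> + Im (leech_form l s) / sqrt 3 - \<delta>))) = sqrt 3"
proof -
  have "(- 3 - leech_norm s / 2)\<^sup>2 + (sqrt 3 * \<delta>)\<^sup>2 = 3"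
    using assms by (elim disjE conjE; hypsubst; simp add: power_mult_distrib power_divide)
  moreover have "Im (leech_form l s) + sqrt 3 * (\<beta> - (\<beta> + Im (leech_form l s) / sqrt 3 - \<delta>)) = sqrt 3 * \<delta>"
    by (simp add: algebra_simps)
  ultimately show ?thesis
    unfolding L_form_r_vec_add cmod_def by simp
qed

lemma Psi_adj_add:
  assumes adm: "admissible l \<beta>" and s: "s \<in> leech"
    and shell: "leech_norm s = -6 \<and> \<delta> = 1 \<or> leech_norm s = -9 \<and> \<delta> = 1/2"
  defines "\<gamma> \<equiv> \<beta> + Im (leech_form l s) / sqrt 3 - \<delta>"
  shows "admissible (l + s) \<gamma> \<and> Psi_adj (r_vec l \<beta>) (r_vec (l + s) \<gamma>)"
proof -
  obtain d j :: int where "2 * \<delta> = of_int d" "of_int d + leech_norm s = 2 * of_int j"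
    using shell
  proof (elim disjE conjE)
    assume "leech_norm s = -6" "\<delta> = 1"
    then show thesis
      using that[of 2 "-2"] by simp
  next
    assume "leech_norm s = -9" "\<delta> = 1/2"
    then show thesis
      using that[of 1 "-4"] by simp
  qed
  then have "admissible (l + s) \<gamma>"
    unfolding \<gamma>_def by (rule admissible_add[OF adm s])
  moreover have "cmod (L_form (r_vec l \<beta>) (r_vec (l + s) \<gamma>)) = sqrt 3"
    unfolding \<gamma>_def using shell by (rule cmod_L_form_r_vec_add)
  ultimately show ?thesis
    unfolding Psi_adj_def Psi_iff using adm by blast
qed

lemma Psi_adj_add_short_vector:
  assumes "admissible l \<beta>" "short_vector s"
  obtains \<gamma> where "admissible (l + s) \<gamma>" "Psi_adj (r_vec l \<beta>) (r_vec (l + s) \<gamma>)"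
proof -
  have s: "s \<in> leech" and "leech_norm s = -6 \<or> leech_norm s = -9"
    using assms(2) unfolding short_vector_def by auto
  then consider "leech_norm s = -6" | "leech_norm s = -9"
    by blast
  then show ?thesis
  proof cases
    case 1
    then show ?thesis
      using Psi_adj_add[OF assms(1) s, of 1] that by blast
  next
    case 2
    then show ?thesis
      using Psi_adj_add[OF assms(1) s, of "1/2"] that by blast
  qed
qed

lemma Psi_path_decrement:
  assumes adm: "admissible l \<beta>" and s: "s \<in> leech" "leech_norm s = -9"
  shows "Psi_adj\<^sup>*\<^sup>* (r_vec l \<beta>) (r_vec l (\<beta> - 1))"
proof -
  define \<gamma> where "\<gamma> = \<beta> + Im (leech_form l s) / sqrt 3 - 1/2"
  have step_there: "admissible (l + s) \<gamma> \<and> Psi_adj (r_vec l \<beta>) (r_vec (l + s) \<gamma>)"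
    unfolding \<gamma>_def using Psi_adj_add[OF adm s(1)] s(2) by simp
  have "Psi_adj (r_vec (l + s) \<gamma>) (r_vec (l + s + - s) (\<gamma> + Im (leech_form (l + s) (- s)) / sqrt 3 - 1/2))"
    using Psi_adj_add[of "l + s" \<gamma> "- s"] step_there s by (simp add: leech_uminus leech_norm_uminus)
  moreover have "\<gamma> + Im (leech_form (l + s) (- s)) / sqrt 3 - 1/2 = \<beta> - 1"
    unfolding \<gamma>_def leech_form_uminus_right leech_form_add_left leech_form_self by simp
  moreover have "l + s + - s = l"
    by (simp add: add.assoc)
  ultimately have step_back: "Psi_adj (r_vec (l + s) \<gamma>) (r_vec l (\<beta> - 1))"
    by simp
  show ?thesis
    using step_there step_back by (meson r_into_rtranclp rtranclp.rtrancl_into_rtrancl)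
qed

lemma Psi_path_shift:
  assumes "admissible l \<beta>" "s \<in> leech" "leech_norm s = -9"
  shows "Psi_adj\<^sup>*\<^sup>* (r_vec l \<beta>) (r_vec l (\<beta> - of_int n))"
proof (induction n rule: int_induct[where k = 0])
  case base
  then show ?case by simp
next
  case (step1 n)
  have "Psi_adj\<^sup>*\<^sup>* (r_vec l (\<beta> - of_int n)) (r_vec l (\<beta> - of_int n - 1))"
    using Psi_path_decrement[OF admissible_shift[OF assms(1), of "- n"] assms(2,3)] by simp
  with step1.IH show ?case
    by (simp add: algebra_simps)
next
  case (step2 n)
  have "Psi_adj\<^sup>*\<^sup>* (r_vec l (\<beta> - of_int n + 1)) (r_vec l (\<beta> - of_int n))"
    using Psi_path_decrement[OF admissible_shift[OF assms(1), of "1 - n"] assms(2,3)]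
    by (simp add: algebra_simps)
  with step2.IH show ?case
    by (simp add: algebra_simps) (meson Psi_path_sym rtranclp_trans)
qed

lemma Psi_path_fibre:
  assumes "admissible l \<beta>" "admissible l \<beta>'" "s \<in> leech" "leech_norm s = -9"
  shows "Psi_adj\<^sup>*\<^sup>* (r_vec l \<beta>) (r_vec l \<beta>')"
proof -
  obtain k k' :: int where "2 * \<beta> + 1 - leech_norm l = 2 * of_int k"
    and "2 * \<beta>' + 1 - leech_norm l = 2 * of_int k'"
    using assms(1,2) unfolding admissible_def by blast
  then have "\<beta>' = \<beta> - of_int (k - k')"
    by simp
  then show ?thesis
    using Psi_path_shift[OF assms(1,3,4), of "k - k'"] by simp
qed

lemma Psi_path_from_origin:
  assumes "l \<in> short_closure" "admissible l \<beta>"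
  shows "Psi_adj\<^sup>*\<^sup>* (r_vec 0 (1/2)) (r_vec l \<beta>)"
  using assms
proof (induction arbitrary: \<beta>)
  case sum_closure_zero
  have "leech_gen_theta \<in> leech"
    using short_vector_leech_gens(5) unfolding short_vector_def by blast
  then show ?case
    by (rule Psi_path_fibre[OF admissible_zero sum_closure_zero.prems _ leech_norm_leech_gen_theta])
next
  case (sum_closure_add_gen l s)
  then have "short_vector (- s)"
    by (simp add: short_vector_uminus)
  then obtain \<gamma> where "admissible (l + s + - s) \<gamma>"
    and edge: "Psi_adj (r_vec (l + s) \<beta>) (r_vec (l + s + - s) \<gamma>)"
    using Psi_adj_add_short_vector[OF sum_closure_add_gen.prems] by blast
  moreover have "l + s + - s = l"
    by (simp add: add.assoc)
  ultimately have "admissible l \<gamma>" "Psi_adj (r_vec l \<gamma>) (r_vec (l + s) \<beta>)"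
    using Psi_adj_sym by simp_all
  then show ?case
    using sum_closure_add_gen.IH by (blast intro: rtranclp.rtrancl_into_rtrancl)
qed

theorem mainTheorem4:
  shows "(\<forall>r\<in>Psi. r \<in> Lset \<and> L_form r r = -3) \<and>
         (\<forall>a\<in>Psi. \<forall>b\<in>Psi. Psi_adj\<^sup>*\<^sup>* a b)"
proof
  show "\<forall>r\<in>Psi. r \<in> Lset \<and> L_form r r = -3"
    by (auto simp: Psi_iff r_vec_in_Lset L_form_r_vec_self)
  have origin: "Psi_adj\<^sup>*\<^sup>* (r_vec 0 (1/2)) r" if r: "r \<in> Psi" for r
  proof -
    obtain l \<beta> where "r = r_vec l \<beta>" "admissible l \<beta>"
      using r unfolding Psi_iff by blast
    then show ?thesis
      using Psi_path_from_origin leech_subset_short_closure unfolding admissible_def by blast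
  qed
  show "\<forall>a\<in>Psi. \<forall>b\<in>Psi. Psi_adj\<^sup>*\<^sup>* a b"
    using rtranclp_trans[OF Psi_path_sym[OF origin] origin] by blast
qed

end
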